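(* Let $(V,\underline M)$ be a correlation algebra with associated family $\underline m=m_2,m_3,\dots$. Then: (1) $m_2(x,1_V)=x$ for all $x\in V$; (2) for all $n\ge3$, $m_n(x_1,\dots,x_n)=0$ whenever $x_j=1_V$ for some $1\le j\le n$; (3) for all $n\ge0$ and $x_1,\dots,x_n,y,z\in V$, $m_{n+2}(x_1,\dots,x_n,y,z)=(-1)^{|y||z|}m_{n+2}(x_1,\dots,x_n,z,y)$; (4) for all $n\ge2$, $x_1,\dots,x_n,y,z\in V$ and $\sigma\in\mathrm{Perm}_n$, $m_{n+2}(x_1,\dots,x_n,y,z)=\epsilon(\sigma)m_{n+2}(x_{\sigma(1)},\dots,x_{\sigma(n)},y,z)$, where $\epsilon(\sigma)$ is the Koszul sign.
   Context: Conventions: $\Bbbk$ is a field of characteristic zero; vector spaces are $\mathbb Z$-graded, $|x|$ is the degree. A pointed graded vector space is $(V,1_V)$ with $1_V\in V^0$. $S^nV$ is the graded symmetric power; maps on $S^nV$ are graded-symmetric multilinear maps (Koszul signs). $P(n)$ is the set of partitions of $[n]$, written $\pi=B_1\sqcup\dots\sqcup B_{|\pi|}$ with blocks ordered by increasing maximal element and elements of each block in increasing order; $k\sim_\pi k'$ means same block. For $B=\{j_1<\dots<j_r\}$, $v_B=v_{j_1}\otimes\dots\otimes v_{j_r}$ and $f(v_B)=f_r(v_{j_1},\dots,v_{j_r})$; $\epsilon(\pi)$ is the Koszul sign of rearranging $v_1\otimes\dots\otimes v_n$ into $v_{B_1}\otimes\dots\otimes v_{B_{|\pi|}}$. A correlation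 algebra is a pair $(V,\underline M)$ where $V$ is a pointed graded vector space and $M_n:S^nV\to V$ ($n\ge1$) are degree-$0$ linear maps with $M_1=\mathrm{id}_V$ and $M_{n+1}(v_1,\dots,v_n,1_V)=M_n(v_1,\dots,v_n)$. Its associated family $m_n:V^{\otimes n}\to V$ ($n\ge2$) is defined recursively by $M_n(v_1,\dots,v_n)=\sum\epsilon(\pi)M_{|\pi|}(v_{B_1},\dots,v_{B_{|\pi|-1}},m(v_{B_{|\pi|}}))$, the sum over $\pi\in P(n)$ with $|B_{|\pi|}|=n-|\pi|+1$ (all blocks but the last are singletons) and $n-1\sim_\pi n$ (the term with $|\pi|=1$ being $m_n(v_1,\dots,v_n)$); in particular $m_2=M_2$. *)

theory Defs
  imports Complex_Main "HOL-Combinatorics.Permutations"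
begin

definition graded_space :: "('k::field \<Rightarrow> 'v::ab_group_add \<Rightarrow> 'v) \<Rightarrow> (int \<Rightarrow> 'v set) \<Rightarrow> bool" where
  "graded_space scale G \<longleftrightarrow>
     vector_space scale \<and> (\<forall>i. module.subspace scale (G i)) \<and>
     (\<forall>v. \<exists>!c. finite {i. c i \<noteq> 0} \<and> (\<forall>i. c i \<in> G i) \<and> v = (\<Sum>i\<in>{i. c i \<noteq> 0}. c i))"

definition homog :: "(int \<Rightarrow> 'v set) \<Rightarrow> 'v list \<Rightarrow> int list \<Rightarrow> bool" where
  "homog G xs ds \<longleftrightarrow> list_all2 (\<lambda>x d. x \<in> G d) xs ds"

text \<open>Koszul sign of rearranging v_0,...,v_{n-1} (degrees ds) into v_{ps!0},...,v_{ps!(n-1)}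
  (ps a permutation of [0..<n]): each pair whose relative order is reversed contributes
  (-1)^(|v_i||v_j|).\<close>
definition koszul :: "int list \<Rightarrow> nat list \<Rightarrow> int" where
  "koszul ds ps = (if even (card {(p, q). p < q \<and> q < length ps \<and> ps ! q < ps ! p \<and>
                                     odd (ds ! (ps ! p) * ds ! (ps ! q))}) then 1 else -1)"

definition multilinear_from :: "('k \<Rightarrow> 'v::ab_group_add \<Rightarrow> 'v) \<Rightarrow> nat \<Rightarrow> ('v list \<Rightarrow> 'v) \<Rightarrow> bool" where
  "multilinear_from scale k f \<longleftrightarrow>
     (\<forall>xs i a u w. k \<le> length xs \<and> i < length xs \<longrightarrow>
        f (xs[i := scale a u + w]) = scale a (f (xs[i := u])) + f (xs[i := w]))"

text \<open>Correlation algebra (V, M): M xs = M_n(x_1,...,x_n) for n = length xs \<ge> 1,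
  degree-0 graded-symmetric multilinear maps with M_1 = id and the unit property.\<close>
definition correlation_algebra ::
  "('k::field \<Rightarrow> 'v::ab_group_add \<Rightarrow> 'v) \<Rightarrow> (int \<Rightarrow> 'v set) \<Rightarrow> 'v \<Rightarrow> ('v list \<Rightarrow> 'v) \<Rightarrow> bool" where
  "correlation_algebra scale G one M \<longleftrightarrow>
     graded_space scale G \<and> one \<in> G 0 \<and>
     multilinear_from scale 1 M \<and>
     (\<forall>xs ds. xs \<noteq> [] \<and> homog G xs ds \<longrightarrow> M xs \<in> G (sum_list ds)) \<and>
     (\<forall>xs ds ps. xs \<noteq> [] \<and> homog G xs ds \<and> distinct ps \<and> set ps = {..<length xs} \<longrightarrow>
        M xs = scale (of_int (koszul ds ps)) (M (map ((!) xs) ps))) \<and>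
     (\<forall>x. M [x] = x) \<and>
     (\<forall>xs. xs \<noteq> [] \<longrightarrow> M (xs @ [one]) = M xs)"

text \<open>The sum ranges
  over the last block B (containing n-1 and n, 0-indexed n-2 and n-1); all other blocks
  are singletons, listed in increasing order.\<close>
definition assoc_family ::
  "('k::field \<Rightarrow> 'v::ab_group_add \<Rightarrow> 'v) \<Rightarrow> (int \<Rightarrow> 'v set) \<Rightarrow> ('v list \<Rightarrow> 'v) \<Rightarrow> ('v list \<Rightarrow> 'v) \<Rightarrow> bool" where
  "assoc_family scale G M m \<longleftrightarrow>
     multilinear_from scale 2 m \<and>
     (\<forall>xs ds. 2 \<le> length xs \<and> homog G xs ds \<longrightarrow>
        M xs = (\<Sum>B\<in>{B. B \<subseteq> {..<length xs} \<and> length xs - 2 \<in> B \<and> length xs - 1 \<in> B}.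
                  scale (of_int (koszul ds (sorted_list_of_set ({..<length xs} - B) @ sorted_list_of_set B)))
                    (M (map ((!) xs) (sorted_list_of_set ({..<length xs} - B))
                        @ [m (map ((!) xs) (sorted_list_of_set B))]))))"

end

theory Submission
  imports Defs
begin

text \<open>Applied to xs @ [y, z], the defining recursion of the associated family reads
  M (xs @ [y, z]) = m (xs @ [y, z]) + (terms indexed by the proper subsets A of the positions of xs),
  where the term for A carries m applied to the entries of xs at A followed by y and z.
  Hence every property of m follows by strong induction on the length of xs from the corresponding
  property of M, once the remaining terms are matched: graded symmetry of M in the last two slots gives
  the swap rule termwise; a permutation P of xs matches the term for P ` B with the term for B, the
  Koszul signs agreeing by the cocycle identity; and for a unit entry one first moves it next to the
  last two slots, after which only the terms keeping the unit outside the m-block survive and they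
  reassemble the recursion for the shorter list. By multilinearity and the grading it suffices to treat
  homogeneous arguments.\<close>

section \<open>Koszul signs\<close>

definition occurs_before :: "nat list \<Rightarrow> nat \<Rightarrow> nat \<Rightarrow> bool" where
  "occurs_before ps u v \<longleftrightarrow> (\<exists>p q. p < q \<and> q < length ps \<and> ps ! p = u \<and> ps ! q = v)"

definition odd_inversions :: "int list \<Rightarrow> nat list \<Rightarrow> (nat \<times> nat) set" where
  "odd_inversions ds ps = {(u, v). u < v \<and> odd (ds ! u * ds ! v) \<and> occurs_before ps v u}"

definition odd_crossings :: "int list \<Rightarrow> nat set \<Rightarrow> nat set \<Rightarrow> (nat \<times> nat) set" where
  "odd_crossings ds X Y = {(u, v). u < v \<and> odd (ds ! u * ds ! v) \<and> v \<in> X \<and> u \<in> Y}"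

lemma occurs_before_in_set: "occurs_before ps u v \<Longrightarrow> u \<in> set ps \<and> v \<in> set ps"
  unfolding occurs_before_def by auto

lemma finite_odd_inversions: "finite (odd_inversions ds ps)"
proof (rule finite_subset)
  show "odd_inversions ds ps \<subseteq> set ps \<times> set ps"
    unfolding odd_inversions_def using occurs_before_in_set by blast
qed auto

lemma koszul_eq_odd_inversions:
  assumes "distinct ps"
  shows "koszul ds ps = (-1) ^ card (odd_inversions ds ps)"
proof -
  let ?Pos = "{(p, q). p < q \<and> q < length ps \<and> ps ! q < ps ! p \<and> odd (ds ! (ps ! p) * ds ! (ps ! q))}"
  let ?f = "\<lambda>(p, q). (ps ! q, ps ! p)"
  have "bij_betw ?f ?Pos (odd_inversions ds ps)"
  proof (rule bij_betw_imageI)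
    show "inj_on ?f ?Pos"
      using assms by (auto simp: inj_on_def nth_eq_iff_index_eq)
    show "?f ` ?Pos = odd_inversions ds ps"
    proof
      show "?f ` ?Pos \<subseteq> odd_inversions ds ps"
        by (auto simp: odd_inversions_def occurs_before_def mult.commute)
      show "odd_inversions ds ps \<subseteq> ?f ` ?Pos"
      proof
        fix x assume "x \<in> odd_inversions ds ps"
        then obtain u v p q where x: "x = (u, v)" "u < v" "odd (ds ! u * ds ! v)" "p < q"
          "q < length ps" "ps ! p = v" "ps ! q = u"
          unfolding odd_inversions_def occurs_before_def by auto
        hence "(p, q) \<in> ?Pos" by (auto simp: mult.commute)
        thus "x \<in> ?f ` ?Pos" using x by force
      qed
    qed
  qed
  hence "card ?Pos = card (odd_inversions ds ps)" by (rule bij_betw_same_card)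
  thus ?thesis unfolding koszul_def by (simp add: minus_one_power_iff)
qed

lemma occurs_before_append:
  "occurs_before (xs @ ys) u v \<longleftrightarrow>
     occurs_before xs u v \<or> occurs_before ys u v \<or> (u \<in> set xs \<and> v \<in> set ys)"
proof
  assume "occurs_before (xs @ ys) u v"
  then obtain p q where pq: "p < q" "q < length (xs @ ys)" "(xs @ ys) ! p = u" "(xs @ ys) ! q = v"
    unfolding occurs_before_def by blast
  consider "q < length xs" | "p < length xs" "\<not> q < length xs" | "\<not> p < length xs"
    using pq(1) by linarith
  thus "occurs_before xs u v \<or> occurs_before ys u v \<or> (u \<in> set xs \<and> v \<in> set ys)"
  proof cases
    case 1
    hence "occurs_before xs u v" using pq unfolding occurs_before_def
      by (intro exI[of _ p] exI[of _ q]) (auto simp: nth_append)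
    thus ?thesis by simp
  next
    case 2
    hence "u \<in> set xs" "v \<in> set ys" using pq by (auto simp: nth_append)
    thus ?thesis by simp
  next
    case 3
    hence "occurs_before ys u v" unfolding occurs_before_def using pq
      by (intro exI[of _ "p - length xs"] exI[of _ "q - length xs"]) (auto simp: nth_append)
    thus ?thesis by simp
  qed
next
  assume "occurs_before xs u v \<or> occurs_before ys u v \<or> (u \<in> set xs \<and> v \<in> set ys)"
  then consider "occurs_before xs u v" | "occurs_before ys u v" | "u \<in> set xs" "v \<in> set ys"
    by blast
  thus "occurs_before (xs @ ys) u v"
  proof cases
    case 1
    then obtain p q where "p < q" "q < length xs" "xs ! p = u" "xs ! q = v"
      unfolding occurs_before_def by blast
    thus ?thesis unfolding occurs_before_def
      by (intro exI[of _ p] exI[of _ q]) (auto simp: nth_append)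
  next
    case 2
    then obtain p q where "p < q" "q < length ys" "ys ! p = u" "ys ! q = v"
      unfolding occurs_before_def by blast
    thus ?thesis unfolding occurs_before_def
      by (intro exI[of _ "length xs + p"] exI[of _ "length xs + q"]) (auto simp: nth_append)
  next
    case 3
    then obtain p q where "p < length xs" "xs ! p = u" "q < length ys" "ys ! q = v"
      by (auto simp: in_set_conv_nth)
    thus ?thesis unfolding occurs_before_def
      by (intro exI[of _ p] exI[of _ "length xs + q"]) (auto simp: nth_append)
  qed
qed

lemma occurs_before_nth_iff:
  "distinct xs \<Longrightarrow> a < length xs \<Longrightarrow> b < length xs \<Longrightarrow> occurs_before xs (xs ! a) (xs ! b) \<longleftrightarrow> a < b"
  unfolding occurs_before_def by (auto simp: nth_eq_iff_index_eq)

lemma occurs_before_asym: "distinct xs \<Longrightarrow> occurs_before xs u v \<Longrightarrow> \<not> occurs_before xs v u"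
  unfolding occurs_before_def by (metis less_trans nth_eq_iff_index_eq order_less_asym')

lemma occurs_before_total:
  "u \<in> set xs \<Longrightarrow> v \<in> set xs \<Longrightarrow> u \<noteq> v \<Longrightarrow> occurs_before xs u v \<or> occurs_before xs v u"
  unfolding occurs_before_def in_set_conv_nth by (metis linorder_neqE_nat)

lemma occurs_before_sorted_iff:
  assumes "sorted xs" "distinct xs"
  shows "occurs_before xs u v \<longleftrightarrow> u \<in> set xs \<and> v \<in> set xs \<and> u < v"
proof -
  have le: "a \<le> b" if "occurs_before xs a b" for a b
    using that assms(1) sorted_nth_mono unfolding occurs_before_def by fastforce
  show ?thesis
    using le[of u v] le[of v u] occurs_before_in_set[of xs u v] occurs_before_total[of u xs v]
      occurs_before_asym[OF assms(2), of u v]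
    by (metis order_antisym_conv order_less_le)
qed

lemma occurs_before_map_iff:
  "occurs_before (map f xs) a b \<longleftrightarrow> (\<exists>u v. occurs_before xs u v \<and> f u = a \<and> f v = b)"
  unfolding occurs_before_def by fastforce

lemma occurs_before_map_inj_iff:
  assumes "inj_on f (set xs)" "u \<in> set xs" "v \<in> set xs"
  shows "occurs_before (map f xs) (f u) (f v) \<longleftrightarrow> occurs_before xs u v"
  using assms occurs_before_in_set unfolding occurs_before_map_iff inj_on_def by metis

lemma odd_inversions_append:
  assumes "distinct (xs @ ys)"
  shows "card (odd_inversions ds (xs @ ys)) =
           card (odd_inversions ds xs) + card (odd_inversions ds ys) +
           card (odd_crossings ds (set xs) (set ys))"
proof -
  have eq: "odd_inversions ds (xs @ ys) =
              odd_inversions ds xs \<union> odd_inversions ds ys \<union> odd_crossings ds (set xs) (set ys)"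
    unfolding odd_inversions_def odd_crossings_def occurs_before_append by auto
  have fin: "finite (odd_crossings ds (set xs) (set ys))"
    by (rule finite_subset[of _ "set ys \<times> set xs"]) (auto simp: odd_crossings_def)
  have "odd_inversions ds xs \<inter> odd_inversions ds ys = {}"
    "(odd_inversions ds xs \<union> odd_inversions ds ys) \<inter> odd_crossings ds (set xs) (set ys) = {}"
    using assms by (auto simp: odd_inversions_def odd_crossings_def dest!: occurs_before_in_set)
  thus ?thesis unfolding eq using fin finite_odd_inversions by (simp add: card_Un_disjoint)
qed

lemma koszul_append:
  "distinct (xs @ ys) \<Longrightarrow>
     koszul ds (xs @ ys) = koszul ds xs * koszul ds ys * (-1) ^ card (odd_crossings ds (set xs) (set ys))"
  by (simp add: koszul_eq_odd_inversions odd_inversions_append power_add)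

lemma koszul_sorted:
  assumes "sorted xs" "distinct xs"
  shows "koszul ds xs = 1"
proof -
  have "odd_inversions ds xs = {}"
    using assms by (auto simp: odd_inversions_def occurs_before_sorted_iff)
  thus ?thesis using assms(2) by (simp add: koszul_eq_odd_inversions)
qed

lemma koszul_cong:
  assumes "distinct ps" "\<And>u. u \<in> set ps \<Longrightarrow> ds ! u = es ! u"
  shows "koszul ds ps = koszul es ps"
proof -
  have "odd_inversions ds ps = odd_inversions es ps"
    using assms(2) unfolding odd_inversions_def by (auto dest: occurs_before_in_set)
  thus ?thesis using assms(1) by (simp add: koszul_eq_odd_inversions)
qed

lemma koszul_map_mono:
  assumes "distinct ps"
    and mono: "\<And>x y. x \<in> set ps \<Longrightarrow> y \<in> set ps \<Longrightarrow> x < y \<Longrightarrow> f x < f y"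
    and deg: "\<And>i. i \<in> set ps \<Longrightarrow> es ! i = ds ! f i"
  shows "koszul ds (map f ps) = koszul es ps"
proof -
  have inj: "inj_on f (set ps)" using mono by (metis inj_onI linorder_neqE_nat order_less_irrefl)
  let ?g = "\<lambda>(i, j). (f i, f j)"
  have "?g ` odd_inversions es ps = odd_inversions ds (map f ps)"
  proof
    show "?g ` odd_inversions es ps \<subseteq> odd_inversions ds (map f ps)"
      using mono deg unfolding odd_inversions_def occurs_before_map_iff
      by (auto dest: occurs_before_in_set)
    show "odd_inversions ds (map f ps) \<subseteq> ?g ` odd_inversions es ps"
    proof
      fix x assume "x \<in> odd_inversions ds (map f ps)"
      then obtain i j where x: "x = (f i, f j)" "f i < f j" "odd (ds ! f i * ds ! f j)"
          "occurs_before ps j i"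
        unfolding odd_inversions_def occurs_before_map_iff by auto
      have ij: "i \<in> set ps" "j \<in> set ps" using occurs_before_in_set[OF x(4)] by auto
      have "i < j" using mono[OF ij(2) ij(1)] x(2) ij by (metis linorder_neqE_nat order_less_asym)
      hence "(i, j) \<in> odd_inversions es ps" using x deg ij unfolding odd_inversions_def by auto
      thus "x \<in> ?g ` odd_inversions es ps" using x by force
    qed
  qed
  moreover have "inj_on ?g (odd_inversions es ps)"
    using inj by (auto simp: inj_on_def odd_inversions_def dest!: occurs_before_in_set)
  moreover have "distinct (map f ps)" using assms(1) inj by (simp add: distinct_map)
  ultimately show ?thesis using assms(1) by (simp add: koszul_eq_odd_inversions card_image[symmetric])
qed

lemma minus_one_power_card_sym_diff:
  assumes "finite A" "finite B"
  shows "(-1::int) ^ card ((A - B) \<union> (B - A)) = (-1) ^ card A * (-1) ^ card B"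
proof -
  have "card A + card B = card (A \<union> B) + card (A \<inter> B)"
    using assms by (rule card_Un_Int)
  also have "A \<union> B = ((A - B) \<union> (B - A)) \<union> (A \<inter> B)" by auto
  also have "card \<dots> = card ((A - B) \<union> (B - A)) + card (A \<inter> B)"
    using assms by (intro card_Un_disjoint) auto
  finally have "card A + card B = card ((A - B) \<union> (B - A)) + 2 * card (A \<inter> B)" by simp
  hence "(-1::int) ^ (card A + card B) = (-1) ^ card ((A - B) \<union> (B - A))"
    by (simp add: power_add power_mult)
  thus ?thesis by (simp add: power_add)
qed

lemma inj_on_sorted_pair_image:
  fixes f :: "nat \<Rightarrow> 'a::linorder"
  assumes "inj_on f {..<n}"
  shows "inj_on (\<lambda>(i, j). (min (f i) (f j), max (f i) (f j))) {(i, j). i < j \<and> j < n}"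
proof (rule inj_onI)
  fix x y assume x: "x \<in> {(i, j). i < j \<and> j < n}" and y: "y \<in> {(i, j). i < j \<and> j < n}"
    and eq: "(\<lambda>(i, j). (min (f i) (f j), max (f i) (f j))) x = (\<lambda>(i, j). (min (f i) (f j), max (f i) (f j))) y"
  obtain i j i' j' where xy: "x = (i, j)" "y = (i', j')" by fastforce
  have ij: "i < j" "j < n" "i' < j'" "j' < n" using x y xy by auto
  have "f i = f i' \<and> f j = f j' \<or> f i = f j' \<and> f j = f i'"
    using eq xy by (auto simp: min_def max_def split: if_splits)
  hence "i = i' \<and> j = j' \<or> i = j' \<and> j = i'"
    using assms ij by (auto simp: inj_on_def)
  thus "x = y" using ij xy by auto
qed

lemma card_odd_pairs_reordered:
  assumes P: "distinct P" "set P = {..<n}" and Q: "distinct Q" "set Q = {..<n}"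
  shows "card {(u, v). u < v \<and> odd (ds ! u * ds ! v) \<and> u < n \<and> v < n \<and>
                 occurs_before P v u \<noteq> occurs_before (map ((!) P) Q) v u}
         = card (odd_inversions (map ((!) ds) P) Q)"
    (is "card ?X = card ?I")
proof -
  have lenP: "length P = n" using P distinct_card by fastforce
  have injP: "inj_on ((!) P) {..<n}" using P lenP by (simp add: inj_on_nth)
  have P_nth: "P ! i < n" if "i < n" for i using P lenP that nth_mem by blast
  have before_P: "occurs_before P (P ! i) (P ! j) \<longleftrightarrow> i < j" if "i < n" "j < n" for i j
    using occurs_before_nth_iff P lenP that by blast
  have before_R: "occurs_before (map ((!) P) Q) (P ! i) (P ! j) \<longleftrightarrow> occurs_before Q i j"
    if "i < n" "j < n" for i j
    using occurs_before_map_inj_iff[of "(!) P" Q] injP Q that by auto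
  have in_Q: "i < n \<and> j < n" if "occurs_before Q i j" for i j
    using occurs_before_in_set[OF that] Q by auto
  let ?f = "\<lambda>(i, j). (min (P ! i) (P ! j), max (P ! i) (P ! j))"
  have "?I \<subseteq> {(i, j). i < j \<and> j < n}"
    using in_Q by (auto simp: odd_inversions_def)
  hence inj: "inj_on ?f ?I" using inj_on_sorted_pair_image[OF injP] by (rule inj_on_subset[rotated])
  have img: "?f ` ?I = ?X"
  proof
    show "?f ` ?I \<subseteq> ?X"
    proof (rule image_subsetI)
      fix x assume "x \<in> ?I"
      moreover obtain i j where x: "x = (i, j)" by fastforce
      ultimately have ij: "i < j" "odd (ds ! (P ! i) * ds ! (P ! j))" "occurs_before Q j i" "i < n" "j < n"
        using in_Q lenP by (auto simp: odd_inversions_def)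
      have "P ! i \<noteq> P ! j" using ij injP by (auto simp: inj_on_def)
      moreover have "\<not> occurs_before Q i j" using occurs_before_asym[OF Q(1) ij(3)] .
      ultimately show "?f x \<in> ?X"
        unfolding x using ij P_nth before_P before_R by (auto simp: min_def max_def mult.commute)
    qed
    show "?X \<subseteq> ?f ` ?I"
    proof (rule subsetI)
      fix x assume "x \<in> ?X"
      moreover obtain u v where x: "x = (u, v)" by fastforce
      ultimately have uv: "u < v" "odd (ds ! u * ds ! v)" "u < n" "v < n"
        "occurs_before P v u \<noteq> occurs_before (map ((!) P) Q) v u" by auto
      obtain a b where ab: "a < n" "P ! a = u" "b < n" "P ! b = v"
        using uv P lenP by (metis in_set_conv_nth lessThan_iff)
      have "a \<noteq> b" using ab uv by auto
      have "(min a b, max a b) \<in> ?I"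
      proof (cases "a < b")
        case True
        hence "occurs_before Q b a" using uv ab before_P before_R by auto
        thus ?thesis using True ab uv lenP by (auto simp: odd_inversions_def)
      next
        case False
        hence "\<not> occurs_before Q b a" using uv ab before_P before_R by auto
        hence "occurs_before Q a b" using occurs_before_total[of a Q b] Q ab \<open>a \<noteq> b\<close> by auto
        moreover have "b < a" using False \<open>a \<noteq> b\<close> by simp
        ultimately show ?thesis using ab uv lenP by (auto simp: odd_inversions_def mult.commute)
      qed
      moreover have "?f (min a b, max a b) = (u, v)" using ab uv by (auto simp: min_def max_def)
      ultimately show "x \<in> ?f ` ?I" unfolding x by force
    qed
  qed
  show ?thesis using card_image[OF inj] img by simp
qed

lemma koszul_map_nth:
  assumes P: "distinct P" "set P = {..<n}" and Q: "distinct Q" "set Q = {..<n}"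
  shows "koszul ds (map ((!) P) Q) = koszul ds P * koszul (map ((!) ds) P) Q"
proof -
  let ?R = "map ((!) P) Q"
  let ?X = "{(u, v). u < v \<and> odd (ds ! u * ds ! v) \<and> u < n \<and> v < n \<and>
                occurs_before P v u \<noteq> occurs_before ?R v u}"
  have lenP: "length P = n" using P distinct_card by fastforce
  have "inj_on ((!) P) (set Q)" using P Q lenP by (simp add: inj_on_nth)
  hence R: "distinct ?R" "set ?R = {..<n}"
    using Q P lenP nth_image[of n P] by (auto simp: distinct_map lessThan_atLeast0)
  have "odd_inversions ds ?R = (odd_inversions ds P - ?X) \<union> (?X - odd_inversions ds P)"
    unfolding odd_inversions_def using occurs_before_in_set P R by blast
  moreover have "finite ?X" by (rule finite_subset[of _ "{..<n} \<times> {..<n}"]) auto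
  ultimately have "koszul ds ?R = koszul ds P * (-1) ^ card ?X"
    using R P by (simp add: koszul_eq_odd_inversions minus_one_power_card_sym_diff finite_odd_inversions)
  thus ?thesis using card_odd_pairs_reordered[OF P Q] Q by (simp add: koszul_eq_odd_inversions)
qed

lemma koszul_append_upt:
  assumes "distinct ps" "set ps \<subseteq> {..<length ds}"
  shows "koszul (ds @ es) (ps @ [length ds..<length ds + k]) = koszul ds ps"
proof -
  have "distinct (ps @ [length ds..<length ds + k])" using assms by auto
  moreover have "odd_crossings (ds @ es) (set ps) (set [length ds..<length ds + k]) = {}"
    using assms by (auto simp: odd_crossings_def)
  moreover have "koszul (ds @ es) ps = koszul ds ps"
    using assms by (intro koszul_cong) (auto simp: nth_append)
  ultimately show ?thesis using assms by (simp add: koszul_append koszul_sorted)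
qed

lemma koszul_append_shifted:
  assumes "distinct ps" "set ps \<subseteq> {..<length ds}" "distinct qs" "set qs \<subseteq> {..<length es}"
  shows "koszul (ds @ es) (ps @ map (\<lambda>i. i + length ds) qs) = koszul ds ps * koszul es qs"
proof -
  have "distinct (ps @ map (\<lambda>i. i + length ds) qs)" using assms
    by (auto simp: distinct_map inj_on_def)
  moreover have "odd_crossings (ds @ es) (set ps) (set (map (\<lambda>i. i + length ds) qs)) = {}"
    using assms by (auto simp: odd_crossings_def)
  moreover have "koszul (ds @ es) ps = koszul ds ps"
    using assms by (intro koszul_cong) (auto simp: nth_append)
  moreover have "koszul (ds @ es) (map (\<lambda>i. i + length ds) qs) = koszul es qs"
    using assms by (intro koszul_map_mono) (auto simp: nth_append)
  ultimately show ?thesis by (simp add: koszul_append)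
qed

lemma koszul_swap_last_two:
  assumes "k = length ds"
  shows "koszul (ds @ [a, b]) ([0..<k] @ [Suc k, k]) = (if odd (a * b) then -1 else 1)"
proof -
  have "occurs_before [Suc k, k] u v \<longleftrightarrow> u = Suc k \<and> v = k" for u v
  proof
    show "occurs_before [Suc k, k] u v \<Longrightarrow> u = Suc k \<and> v = k"
      unfolding occurs_before_def by (auto simp: less_Suc_eq)
    show "u = Suc k \<and> v = k \<Longrightarrow> occurs_before [Suc k, k] u v"
      unfolding occurs_before_def by (intro exI[of _ 0] exI[of _ 1]) auto
  qed
  hence "odd_inversions (ds @ [a, b]) [Suc k, k] = (if odd (a * b) then {(k, Suc k)} else {})"
    using assms by (auto simp: odd_inversions_def nth_append)
  moreover have "odd_crossings (ds @ [a, b]) (set [0..<k]) (set [Suc k, k]) = {}"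
    by (auto simp: odd_crossings_def)
  ultimately show ?thesis
    by (simp add: koszul_append koszul_sorted koszul_eq_odd_inversions[of "[Suc k, k]"])
qed

lemma koszul_move_to_end:
  assumes "c < length ds" "even (ds ! c)"
  shows "koszul ds ([0..<c] @ [Suc c..<length ds] @ [c]) = 1"
proof -
  have "odd_crossings ds (set ([0..<c] @ [Suc c..<length ds])) {c} = {}"
    using assms by (auto simp: odd_crossings_def)
  moreover have "sorted ([0..<c] @ [Suc c..<length ds])"
    by (auto simp: sorted_append)
  ultimately show ?thesis
    using koszul_append[of "[0..<c] @ [Suc c..<length ds]" "[c]" ds] by (simp add: koszul_sorted)
qed

lemma sorted_list_of_set_Un_less:
  assumes "finite A" "finite B" "\<And>a b. a \<in> A \<Longrightarrow> b \<in> B \<Longrightarrow> a < b"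
  shows "sorted_list_of_set (A \<union> B) = sorted_list_of_set A @ sorted_list_of_set B"
proof (rule sorted_distinct_set_unique)
  show "sorted (sorted_list_of_set A @ sorted_list_of_set B)"
    using assms by (auto simp: sorted_append less_imp_le)
  show "distinct (sorted_list_of_set A @ sorted_list_of_set B)"
    using assms by fastforce
qed (use assms in auto)

definition unshuffle :: "nat \<Rightarrow> nat set \<Rightarrow> nat list" where
  "unshuffle n A = sorted_list_of_set ({..<n} - A) @ sorted_list_of_set A"

lemma unshuffle_perm:
  assumes "A \<subseteq> {..<n}"
  shows "distinct (unshuffle n A)" "set (unshuffle n A) = {..<n}"
proof -
  have "finite A" using assms finite_subset by blast
  thus "distinct (unshuffle n A)" "set (unshuffle n A) = {..<n}"
    using assms by (auto simp: unshuffle_def)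
qed

lemma koszul_unshuffle_insert_even:
  assumes A: "A \<subseteq> {..<n}" and len: "length ds = n" and "even d"
  shows "koszul (ds @ [d]) (unshuffle (Suc n) A) = koszul ds (unshuffle n A)"
proof -
  have fin: "finite A" using A finite_subset by blast
  let ?C = "{..<n} - A"
  have "sorted_list_of_set (?C \<union> {n}) = sorted_list_of_set ?C @ [n]"
    by (subst sorted_list_of_set_Un_less) auto
  moreover have "{..<Suc n} - A = ?C \<union> {n}" using A by auto
  ultimately have split: "unshuffle (Suc n) A = (sorted_list_of_set ?C @ [n]) @ sorted_list_of_set A"
    unfolding unshuffle_def by simp
  have "odd_crossings (ds @ [d]) (?C \<union> {n}) A = odd_crossings ds ?C A"
    unfolding odd_crossings_def using \<open>even d\<close> len by (auto simp: nth_append)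
  moreover have "koszul (ds @ [d]) (sorted_list_of_set ?C @ [n]) = 1"
    by (rule koszul_sorted) (auto simp: sorted_append)
  moreover have "distinct ((sorted_list_of_set ?C @ [n]) @ sorted_list_of_set A)"
    using fin A by auto
  ultimately have "koszul (ds @ [d]) (unshuffle (Suc n) A) = (-1) ^ card (odd_crossings ds ?C A)"
    unfolding split using fin by (subst koszul_append) (simp_all add: koszul_sorted)
  also have "\<dots> = koszul ds (unshuffle n A)"
    using koszul_append[OF unshuffle_perm(1)[OF A, unfolded unshuffle_def], of ds] fin
    by (simp add: unshuffle_def koszul_sorted)
  finally show ?thesis .
qed

lemma sorted_list_of_set_insert_top_pair:
  assumes "A \<subseteq> {..<k}"
  shows "sorted_list_of_set (A \<union> {k, Suc k}) = sorted_list_of_set A @ [k, Suc k]"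
proof -
  have "sorted_list_of_set {k, Suc k} = [k, Suc k]"
    by (subst sorted_list_of_set_unique[symmetric]) auto
  thus ?thesis using assms finite_subset by (subst sorted_list_of_set_Un_less) auto
qed

lemma unshuffle_insert_top_pair:
  assumes "A \<subseteq> {..<k}"
  shows "unshuffle (Suc (Suc k)) (A \<union> {k, Suc k}) = unshuffle k A @ [k, Suc k]"
proof -
  have "{..<Suc (Suc k)} - (A \<union> {k, Suc k}) = {..<k} - A" by auto
  thus ?thesis unfolding unshuffle_def using sorted_list_of_set_insert_top_pair[OF assms] by simp
qed

section \<open>Sublists, homogeneous lists and restricted permutations\<close>

definition entries_at :: "'a list \<Rightarrow> nat set \<Rightarrow> 'a list" where
  "entries_at xs S = map ((!) xs) (sorted_list_of_set S)"

lemma entries_at_empty [simp]: "entries_at xs {} = []"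
  unfolding entries_at_def by simp

lemma entries_at_all: "entries_at xs {..<length xs} = xs"
  unfolding entries_at_def by (simp add: lessThan_atLeast0 map_nth)

lemma length_entries_at: "finite S \<Longrightarrow> length (entries_at xs S) = card S"
  unfolding entries_at_def by simp

lemma entries_at_append_left: "S \<subseteq> {..<length xs} \<Longrightarrow> entries_at (xs @ ys) S = entries_at xs S"
  unfolding entries_at_def using finite_subset[of S "{..<length xs}"] by (auto simp: nth_append)

lemma homog_length: "homog G xs ds \<Longrightarrow> length ds = length xs"
  unfolding homog_def by (simp add: list_all2_lengthD)

lemma homog_iff: "homog G xs ds \<longleftrightarrow> length xs = length ds \<and> (\<forall>i<length xs. xs ! i \<in> G (ds ! i))"
  unfolding homog_def by (simp add: list_all2_conv_all_nth)

lemma homog_append: "homog G xs ds \<Longrightarrow> homog G ys es \<Longrightarrow> homog G (xs @ ys) (ds @ es)"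
  unfolding homog_def by (simp add: list_all2_appendI)

lemma homog_singleton [simp]: "homog G [x] [d] \<longleftrightarrow> x \<in> G d"
  unfolding homog_def by simp

lemma homog_map_nth:
  "homog G xs ds \<Longrightarrow> set ps \<subseteq> {..<length xs} \<Longrightarrow> homog G (map ((!) xs) ps) (map ((!) ds) ps)"
  by (simp add: homog_iff) (metis lessThan_iff nth_mem subsetD)

lemma homog_entries_at: "homog G xs ds \<Longrightarrow> S \<subseteq> {..<length xs} \<Longrightarrow> homog G (entries_at xs S) (entries_at ds S)"
  unfolding entries_at_def using finite_subset[of S "{..<length xs}"] by (simp add: homog_map_nth)

lemma homog_exists: "(\<And>i. i < length xs \<Longrightarrow> \<exists>d. xs ! i \<in> G d) \<Longrightarrow> \<exists>ds. homog G xs ds"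
  by (rule exI[of _ "map (\<lambda>i. SOME d. xs ! i \<in> G d) [0..<length xs]"])
    (auto simp: homog_iff intro: someI_ex)

lemma sum_list_entries_at_split:
  fixes ds :: "'a::comm_monoid_add list"
  assumes "S \<subseteq> {..<length ds}"
  shows "sum_list (entries_at ds ({..<length ds} - S)) + sum_list (entries_at ds S) = sum_list ds"
proof -
  have "sum_list (entries_at ds T) = sum ((!) ds) T" if "T \<subseteq> {..<length ds}" for T
    using finite_subset[OF that] unfolding entries_at_def by (simp add: sum_list_distinct_conv_sum_set)
  moreover have "sum_list ds = sum ((!) ds) {..<length ds}"
    by (simp add: sum_list_sum_nth lessThan_atLeast0)
  ultimately show ?thesis using assms by (simp add: sum.subset_diff)
qed

lemma homog_append_pair_cases:
  assumes "homog G (us @ [y, z]) ds"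
  obtains es a b where "ds = es @ [a, b]" "homog G us es" "y \<in> G a" "z \<in> G b"
proof -
  obtain es vs where "ds = es @ vs" "homog G us es" "list_all2 (\<lambda>x d. x \<in> G d) [y, z] vs"
    using assms unfolding homog_def list_all2_append1 by blast
  moreover then obtain a b where "vs = [a, b]" "y \<in> G a" "z \<in> G b"
    by (auto simp: list_all2_Cons1)
  ultimately show thesis using that by blast
qed

lemma move_to_end_perm:
  assumes "j < n"
  shows "distinct ([0..<j] @ [Suc j..<n] @ [j])" "set ([0..<j] @ [Suc j..<n] @ [j]) = {..<n}"
  using assms by auto

lemma map_nth_move_to_end:
  assumes "j < length xs"
  shows "map ((!) xs) ([0..<j] @ [Suc j..<length xs] @ [j]) = take j xs @ drop (Suc j) xs @ [xs ! j]"
proof -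
  have "map ((!) xs) [0..<j] = take j xs"
    using assms by (intro nth_equalityI) auto
  moreover have "map ((!) xs) [Suc j..<length xs] = drop (Suc j) xs"
    by (intro nth_equalityI) auto
  ultimately show ?thesis by simp
qed

lemma Pow_lessThan_Suc_proper:
  "Pow {..<Suc k} - {{..<Suc k}} = Pow {..<k} \<union> insert k ` (Pow {..<k} - {{..<k}})"
proof
  show "Pow {..<Suc k} - {{..<Suc k}} \<subseteq> Pow {..<k} \<union> insert k ` (Pow {..<k} - {{..<k}})"
  proof
    fix A assume A: "A \<in> Pow {..<Suc k} - {{..<Suc k}}"
    show "A \<in> Pow {..<k} \<union> insert k ` (Pow {..<k} - {{..<k}})"
    proof (cases "k \<in> A")
      case True
      hence "A - {k} \<in> Pow {..<k} - {{..<k}}" "A = insert k (A - {k})"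
        using A by (auto simp: lessThan_Suc)
      thus ?thesis by blast
    next
      case False
      thus ?thesis using A by (auto simp: less_Suc_eq)
    qed
  qed
  show "Pow {..<k} \<union> insert k ` (Pow {..<k} - {{..<k}}) \<subseteq> Pow {..<Suc k} - {{..<Suc k}}"
    by (auto simp: lessThan_Suc insert_ident)
qed

lemma supersets_top_pair_eq_image:
  "{B. B \<subseteq> {..<k + 2} \<and> k \<in> B \<and> Suc k \<in> B} = (\<lambda>A. A \<union> {k, Suc k}) ` Pow {..<k}"
proof
  show "{B. B \<subseteq> {..<k + 2} \<and> k \<in> B \<and> Suc k \<in> B} \<subseteq> (\<lambda>A. A \<union> {k, Suc k}) ` Pow {..<k}"
  proof
    fix B assume "B \<in> {B. B \<subseteq> {..<k + 2} \<and> k \<in> B \<and> Suc k \<in> B}"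
    hence "B = (B - {k, Suc k}) \<union> {k, Suc k}" "B - {k, Suc k} \<in> Pow {..<k}" by auto
    thus "B \<in> (\<lambda>A. A \<union> {k, Suc k}) ` Pow {..<k}" by blast
  qed
qed auto

lemma card_less_if_proper_index_set: "A \<in> Pow {..<k} - {{..<k}} \<Longrightarrow> card A < k"
  using psubset_card_mono[of "{..<k}" A] by auto

lemma bij_betw_image_nth_proper_subsets:
  assumes "distinct P" "set P = {..<k}"
  shows "bij_betw (image ((!) P)) (Pow {..<k} - {{..<k}}) (Pow {..<k} - {{..<k}})"
proof -
  have "length P = k" using assms distinct_card by fastforce
  hence bij: "bij_betw ((!) P) {..<k} {..<k}" using assms by (intro bij_betw_nth) auto
  hence "bij_betw (image ((!) P)) (Pow {..<k} - {{..<k}}) (Pow {..<k} - {image ((!) P) {..<k}})"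
    by (intro bij_betw_DiffI[OF bij_betw_Pow[OF bij]]) (auto simp: bij_betw_def)
  thus ?thesis using bij by (simp add: bij_betw_def)
qed

lemma permutes_upt_list:
  assumes "\<sigma> permutes {..<n}"
  shows "distinct (map \<sigma> [0..<n])" "set (map \<sigma> [0..<n]) = {..<n}"
  using permutes_inj_on[OF assms, of "{..<n}"] permutes_image[OF assms]
  by (simp_all add: distinct_map lessThan_atLeast0)

lemma obtain_append_pair:
  assumes "2 \<le> length xs"
  obtains us y z where "xs = us @ [y, z]"
proof -
  have ne: "xs \<noteq> []" "butlast xs \<noteq> []" using assms by (auto simp flip: length_greater_0_conv)
  have "xs = butlast xs @ [last xs]" using ne(1) by simp
  also have "butlast xs = butlast (butlast xs) @ [last (butlast xs)]" using ne(2) by simp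
  finally show thesis using that by simp
qed

definition positions_in :: "nat set \<Rightarrow> nat list \<Rightarrow> nat list" where
  "positions_in S = map (the_inv_into {..<card S} ((!) (sorted_list_of_set S)))"

lemma positions_in_perm:
  assumes "finite S" "distinct L" "set L = S"
  shows "distinct (positions_in S L)" "set (positions_in S L) = {..<card S}"
    "map ((!) (sorted_list_of_set S)) (positions_in S L) = L"
proof -
  have bij: "bij_betw ((!) (sorted_list_of_set S)) {..<card S} S"
    by (rule bij_betw_nth) (use assms in auto)
  have "bij_betw (the_inv_into {..<card S} ((!) (sorted_list_of_set S))) S {..<card S}"
    by (rule bij_betw_the_inv_into[OF bij])
  thus "distinct (positions_in S L)" "set (positions_in S L) = {..<card S}"
    using assms unfolding positions_in_def by (auto simp: distinct_map bij_betw_def)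
  have "sorted_list_of_set S ! the_inv_into {..<card S} ((!) (sorted_list_of_set S)) x = x"
    if "x \<in> S" for x
    by (rule f_the_inv_into_f_bij_betw[OF bij]) (use that in auto)
  thus "map ((!) (sorted_list_of_set S)) (positions_in S L) = L"
    unfolding positions_in_def map_map using assms by (intro map_idI) auto
qed

text \<open>For a permutation P of {..<k}, restrict_perm P B is the permutation by which P rearranges the
  entries at the positions P ` B into those of the permuted list at the positions B
  (lemma entries_at_map_nth).\<close>
definition restrict_perm :: "nat list \<Rightarrow> nat set \<Rightarrow> nat list" where
  "restrict_perm P B = positions_in ((!) P ` B) (map ((!) P) (sorted_list_of_set B))"

lemma restrict_perm_perm:
  assumes P: "distinct P" "set P = {..<k}" and B: "B \<subseteq> {..<k}"
  shows "distinct (restrict_perm P B)" "set (restrict_perm P B) = {..<card B}"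
    "map ((!) (sorted_list_of_set ((!) P ` B))) (restrict_perm P B) = map ((!) P) (sorted_list_of_set B)"
proof -
  have "length P = k" using P distinct_card by fastforce
  hence inj: "inj_on ((!) P) B" using P B by (intro inj_on_nth) auto
  have fin: "finite B" using B finite_subset by blast
  have "distinct (map ((!) P) (sorted_list_of_set B))"
    "set (map ((!) P) (sorted_list_of_set B)) = (!) P ` B"
    using inj fin by (auto simp: distinct_map)
  from positions_in_perm[OF _ this] fin card_image[OF inj]
  show "distinct (restrict_perm P B)" "set (restrict_perm P B) = {..<card B}"
    "map ((!) (sorted_list_of_set ((!) P ` B))) (restrict_perm P B) = map ((!) P) (sorted_list_of_set B)"
    unfolding restrict_perm_def by auto
qed

lemma image_nth_Diff:
  assumes "distinct P" "set P = {..<k}" "B \<subseteq> {..<k}"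
  shows "(!) P ` ({..<k} - B) = {..<k} - (!) P ` B"
proof -
  have "length P = k" using assms distinct_card by fastforce
  hence "bij_betw ((!) P) {..<k} {..<k}" using assms by (intro bij_betw_nth) auto
  thus ?thesis using assms(3) inj_on_image_set_diff[of "(!) P" "{..<k}" "{..<k}" B]
    by (simp add: bij_betw_def)
qed

lemma entries_at_map_nth:
  assumes P: "distinct P" "set P = {..<k}" and B: "B \<subseteq> {..<k}"
  shows "map ((!) (entries_at xs ((!) P ` B))) (restrict_perm P B) = entries_at (map ((!) xs) P) B"
proof -
  have "length P = k" using P distinct_card by fastforce
  hence "inj_on ((!) P) B" using P B by (intro inj_on_nth) auto
  hence "card ((!) P ` B) = card B" by (rule card_image)
  hence "i < length (sorted_list_of_set ((!) P ` B))" if "i \<in> set (restrict_perm P B)" for i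
    using restrict_perm_perm(2)[OF assms] that by simp
  hence "map ((!) (entries_at xs ((!) P ` B))) (restrict_perm P B)
           = map ((!) xs) (map ((!) (sorted_list_of_set ((!) P ` B))) (restrict_perm P B))"
    unfolding entries_at_def map_map by (intro map_cong) simp_all
  also have "\<dots> = map ((!) xs) (map ((!) P) (sorted_list_of_set B))"
    unfolding restrict_perm_perm(3)[OF assms] ..
  also have "\<dots> = entries_at (map ((!) xs) P) B"
    unfolding entries_at_def map_map
    using B finite_subset[OF B] \<open>length P = k\<close> by (intro map_cong) auto
  finally show ?thesis .
qed

lemma unshuffle_restrict_perm:
  assumes P: "distinct P" "set P = {..<k}" and B: "B \<subseteq> {..<k}"
  defines "T \<equiv> restrict_perm P ({..<k} - B) @ map (\<lambda>i. i + (k - card B)) (restrict_perm P B)"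
  shows "distinct T" "set T = {..<k}"
    "map ((!) (unshuffle k ((!) P ` B))) T = map ((!) P) (unshuffle k B)"
proof -
  let ?A = "(!) P ` B" and ?B' = "{..<k} - B"
  have len: "length P = k" using P distinct_card by fastforce
  have fin: "finite B" using B finite_subset by blast
  have cardB: "card B \<le> k" using card_mono[OF _ B] by simp
  have inj: "inj_on ((!) P) {..<k}" using P len by (intro inj_on_nth) auto
  have Ac: "{..<k} - ?A = (!) P ` ?B'" using image_nth_Diff[OF P B] by simp
  have cardAc: "card ({..<k} - ?A) = k - card B"
    unfolding Ac using card_image[OF inj_on_subset[OF inj, of ?B']] fin B by (simp add: card_Diff_subset)
  have r1: "distinct (restrict_perm P ?B')" "set (restrict_perm P ?B') = {..<k - card B}"
    using restrict_perm_perm(1,2)[OF P, of ?B'] fin B by (auto simp: card_Diff_subset)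
  have r2: "distinct (restrict_perm P B)" "set (restrict_perm P B) = {..<card B}"
    using restrict_perm_perm(1,2)[OF P B] by auto
  show "distinct T" unfolding T_def using r1 r2 by (auto simp: distinct_map inj_on_def)
  have "(\<lambda>i. i + (k - card B)) ` {..<card B} = {k - card B..<k}"
  proof
    show "{k - card B..<k} \<subseteq> (\<lambda>i. i + (k - card B)) ` {..<card B}"
    proof
      fix x assume "x \<in> {k - card B..<k}"
      thus "x \<in> (\<lambda>i. i + (k - card B)) ` {..<card B}"
        using cardB by (intro image_eqI[of _ _ "x - (k - card B)"]) auto
    qed
  qed (use cardB in auto)
  thus "set T = {..<k}" unfolding T_def using r1 r2 cardB by auto
  have "map ((!) (unshuffle k ?A)) (restrict_perm P ?B')
          = map ((!) (sorted_list_of_set ({..<k} - ?A))) (restrict_perm P ?B')"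
    using r1 cardAc unfolding unshuffle_def by (intro map_cong) (auto simp: nth_append)
  also have "\<dots> = map ((!) P) (sorted_list_of_set ?B')"
    unfolding Ac by (rule restrict_perm_perm(3)[OF P]) auto
  moreover have "map ((!) (unshuffle k ?A)) (map (\<lambda>i. i + (k - card B)) (restrict_perm P B))
                   = map ((!) (sorted_list_of_set ?A)) (restrict_perm P B)"
    using cardAc unfolding unshuffle_def map_map by (intro map_cong) (auto simp: nth_append)
  moreover note restrict_perm_perm(3)[OF P B]
  ultimately show "map ((!) (unshuffle k ?A)) T = map ((!) P) (unshuffle k B)"
    unfolding T_def unshuffle_def by simp
qed

lemma koszul_restrict_perm:
  assumes P: "distinct P" "set P = {..<k}" and B: "B \<subseteq> {..<k}"
  shows "koszul ds (unshuffle k ((!) P ` B)) *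
           (koszul (entries_at ds ({..<k} - (!) P ` B)) (restrict_perm P ({..<k} - B)) *
            koszul (entries_at ds ((!) P ` B)) (restrict_perm P B))
         = koszul ds P * koszul (map ((!) ds) P) (unshuffle k B)"
proof -
  let ?A = "(!) P ` B"
  define T where "T = restrict_perm P ({..<k} - B) @ map (\<lambda>i. i + (k - card B)) (restrict_perm P B)"
  note T = unshuffle_restrict_perm[OF P B, folded T_def]
  have len: "length P = k" using P distinct_card by fastforce
  hence A: "?A \<subseteq> {..<k}" using B P nth_mem by fastforce
  have inj: "inj_on ((!) P) {..<k}" using P len by (intro inj_on_nth) auto
  have fin: "finite B" using B finite_subset by blast
  have cardAc: "length (entries_at ds ({..<k} - ?A)) = k - card B"
    using image_nth_Diff[OF P B] card_image[OF inj_on_subset[OF inj, of "{..<k} - B"]] fin B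
    by (simp add: length_entries_at card_Diff_subset)
  have "koszul ds P * koszul (map ((!) ds) P) (unshuffle k B) = koszul ds (map ((!) P) (unshuffle k B))"
    using koszul_map_nth[OF P unshuffle_perm[OF B]] ..
  also have "\<dots> = koszul ds (unshuffle k ?A) * koszul (map ((!) ds) (unshuffle k ?A)) T"
    unfolding T(3)[symmetric] by (rule koszul_map_nth[OF unshuffle_perm[OF A] T(1,2)])
  also have "map ((!) ds) (unshuffle k ?A) = entries_at ds ({..<k} - ?A) @ entries_at ds ?A"
    unfolding unshuffle_def entries_at_def by simp
  also have "koszul \<dots> T = koszul (entries_at ds ({..<k} - ?A)) (restrict_perm P ({..<k} - B)) *
                             koszul (entries_at ds ?A) (restrict_perm P B)"
    unfolding T_def cardAc[symmetric]
  proof (rule koszul_append_shifted)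
    show "distinct (restrict_perm P ({..<k} - B))" "distinct (restrict_perm P B)"
      using restrict_perm_perm(1)[OF P] B by auto
    show "set (restrict_perm P ({..<k} - B)) \<subseteq> {..<length (entries_at ds ({..<k} - ?A))}"
      using restrict_perm_perm(2)[OF P, of "{..<k} - B"] cardAc fin B by (simp add: card_Diff_subset)
    show "set (restrict_perm P B) \<subseteq> {..<length (entries_at ds ?A)}"
      using restrict_perm_perm(2)[OF P B] card_image[OF inj_on_subset[OF inj B]] fin
      by (simp add: length_entries_at)
  qed
  finally show ?thesis by simp
qed

section \<open>Multilinear maps on graded spaces\<close>

lemma multilinear_from_add:
  assumes "multilinear_from scale k f" "vector_space scale" "k \<le> length xs" "i < length xs"
  shows "f (xs[i := u + w]) = f (xs[i := u]) + f (xs[i := w])"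
proof -
  interpret vector_space scale by (rule assms(2))
  show ?thesis
    using assms(1,3,4) unfolding multilinear_from_def by (metis scale_one)
qed

lemma multilinear_from_zero:
  assumes "multilinear_from scale k f" "vector_space scale" "k \<le> length xs" "i < length xs"
  shows "f (xs[i := 0]) = 0"
  using multilinear_from_add[OF assms, of 0 0] by simp

lemma multilinear_from_scale:
  assumes "multilinear_from scale k f" "vector_space scale" "k \<le> length xs" "i < length xs"
  shows "f (xs[i := scale a u]) = scale a (f (xs[i := u]))"
  using assms multilinear_from_zero[OF assms] unfolding multilinear_from_def
  by (metis add.right_neutral)

lemma eq_at_slot_if_eq_on_homogeneous:
  fixes F H :: "'v::ab_group_add list \<Rightarrow> 'w::ab_group_add"
  assumes graded: "graded_space scale G" and i: "i < length ys"
    and F_add: "\<And>u w. F (ys[i := u + w]) = F (ys[i := u]) + F (ys[i := w])"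
    and H_add: "\<And>u w. H (ys[i := u + w]) = H (ys[i := u]) + H (ys[i := w])"
    and hom: "\<And>d v. v \<in> G d \<Longrightarrow> F (ys[i := v]) = H (ys[i := v])"
  shows "F ys = H ys"
proof -
  have F_sum: "F (ys[i := sum g J]) = (\<Sum>j\<in>J. F (ys[i := g j]))" if "finite J" for g J
    using that F_add[of 0 0] by (induction J rule: finite_induct) (simp_all add: F_add)
  have H_sum: "H (ys[i := sum g J]) = (\<Sum>j\<in>J. H (ys[i := g j]))" if "finite J" for g J
    using that H_add[of 0 0] by (induction J rule: finite_induct) (simp_all add: H_add)
  obtain c where c: "finite {j. c j \<noteq> 0}" "\<forall>j. c j \<in> G j" "ys ! i = (\<Sum>j\<in>{j. c j \<noteq> 0}. c j)"
    using graded unfolding graded_space_def by metis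
  have "F ys = F (ys[i := ys ! i])" by simp
  also have "\<dots> = (\<Sum>j\<in>{j. c j \<noteq> 0}. H (ys[i := c j]))"
    unfolding c(3) F_sum[OF c(1)] using c(2) by (auto intro!: sum.cong hom)
  also have "\<dots> = H ys"
    by (metis H_sum[OF c(1)] c(3) list_update_id)
  finally show ?thesis .
qed

lemma eq_if_eq_on_homogeneous:
  fixes F H :: "'v::ab_group_add list \<Rightarrow> 'w::ab_group_add"
  assumes graded: "graded_space scale G" and S: "S \<subseteq> {..<n}"
    and F_add: "\<And>i ys u w. i \<in> S \<Longrightarrow> length ys = n \<Longrightarrow>
                  F (ys[i := u + w]) = F (ys[i := u]) + F (ys[i := w])"
    and H_add: "\<And>i ys u w. i \<in> S \<Longrightarrow> length ys = n \<Longrightarrow>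
                  H (ys[i := u + w]) = H (ys[i := u]) + H (ys[i := w])"
    and hom: "\<And>ys. length ys = n \<Longrightarrow> \<forall>i\<in>S. \<exists>d. ys ! i \<in> G d \<Longrightarrow> F ys = H ys"
    and ys: "length ys = n"
  shows "F ys = H ys"
proof -
  have "\<forall>ys. length ys = n \<and> (\<forall>i\<in>S - T. \<exists>d. ys ! i \<in> G d) \<longrightarrow> F ys = H ys"
    if "finite T" "T \<subseteq> S" for T
    using that
  proof (induction T rule: finite_induct)
    case empty
    thus ?case using hom by simp
  next
    case (insert s T)
    show ?case
    proof (intro allI impI)
      fix ys assume ys: "length ys = n \<and> (\<forall>i\<in>S - insert s T. \<exists>d. ys ! i \<in> G d)"
      have "s < length ys" using insert.prems S ys by auto
      thus "F ys = H ys"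
      proof (rule eq_at_slot_if_eq_on_homogeneous[OF graded])
        show "F (ys[s := v]) = H (ys[s := v])" if "v \<in> G d" for d v
        proof -
          have "\<exists>d. ys[s := v] ! i \<in> G d" if "i \<in> S - T" for i
            using ys \<open>v \<in> G d\<close> \<open>s < length ys\<close> that by (cases "i = s") auto
          thus ?thesis using insert.IH insert.prems ys by simp
        qed
      qed (use insert.prems ys F_add H_add in auto)
    qed
  qed
  thus ?thesis using S ys finite_subset by blast
qed

section \<open>The associated family of a correlation algebra\<close>

locale correlation_family =
  fixes scale :: "'k::field_char_0 \<Rightarrow> 'v::ab_group_add \<Rightarrow> 'v"
    and G :: "int \<Rightarrow> 'v set" and one :: 'v and M m :: "'v list \<Rightarrow> 'v"
  assumes correlation_algebra: "correlation_algebra scale G one M"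
    and assoc_family: "assoc_family scale G M m"
begin

sublocale vs: vector_space scale
  using correlation_algebra unfolding correlation_algebra_def graded_space_def by blast

lemma graded: "graded_space scale G"
  using correlation_algebra unfolding correlation_algebra_def by blast

lemma subspace_G: "vs.subspace (G d)"
  using graded unfolding graded_space_def by blast

lemma one_in_G0: "one \<in> G 0"
  using correlation_algebra unfolding correlation_algebra_def by blast

lemma M_multilinear: "multilinear_from scale 1 M"
  using correlation_algebra unfolding correlation_algebra_def by blast

lemma m_multilinear: "multilinear_from scale 2 m"
  using assoc_family unfolding assoc_family_def by blast

lemma M_in_G: "xs \<noteq> [] \<Longrightarrow> homog G xs ds \<Longrightarrow> M xs \<in> G (sum_list ds)"
  using correlation_algebra unfolding correlation_algebra_def by blast

lemma M_koszul:
  "xs \<noteq> [] \<Longrightarrow> homog G xs ds \<Longrightarrow> distinct ps \<Longrightarrow> set ps = {..<length xs} \<Longrightarrow>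
     M xs = scale (of_int (koszul ds ps)) (M (map ((!) xs) ps))"
  using correlation_algebra unfolding correlation_algebra_def by blast

lemma M_singleton: "M [x] = x"
  using correlation_algebra unfolding correlation_algebra_def by blast

lemma M_append_one: "xs \<noteq> [] \<Longrightarrow> M (xs @ [one]) = M xs"
  using correlation_algebra unfolding correlation_algebra_def by blast

lemma M_recursion:
  "2 \<le> length xs \<Longrightarrow> homog G xs ds \<Longrightarrow>
     M xs = (\<Sum>B | B \<subseteq> {..<length xs} \<and> length xs - 2 \<in> B \<and> length xs - 1 \<in> B.
               scale (of_int (koszul ds (unshuffle (length xs) B)))
                 (M (entries_at xs ({..<length xs} - B) @ [m (entries_at xs B)])))"
  using assoc_family unfolding assoc_family_def unshuffle_def entries_at_def by blast

lemma M_add: "xs \<noteq> [] \<Longrightarrow> i < length xs \<Longrightarrow> M (xs[i := u + w]) = M (xs[i := u]) + M (xs[i := w])"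
  by (rule multilinear_from_add[OF M_multilinear vs.vector_space_axioms]) (auto simp: Suc_le_eq)

lemma m_add: "2 \<le> length xs \<Longrightarrow> i < length xs \<Longrightarrow> m (xs[i := u + w]) = m (xs[i := u]) + m (xs[i := w])"
  by (rule multilinear_from_add[OF m_multilinear vs.vector_space_axioms])

lemma m_add_left:
  "i < length xs \<Longrightarrow> 2 \<le> length (xs @ ys) \<Longrightarrow>
     m (xs[i := u + w] @ ys) = m (xs[i := u] @ ys) + m (xs[i := w] @ ys)"
  using m_add[of "xs @ ys" i u w] by (simp add: list_update_append1)

lemma m_add_right:
  "i < length ys \<Longrightarrow> 2 \<le> length (xs @ ys) \<Longrightarrow>
     m (xs @ ys[i := u + w]) = m (xs @ ys[i := u]) + m (xs @ ys[i := w])"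
  using m_add[of "xs @ ys" "length xs + i" u w] by (simp add: list_update_append)

lemma M_append_scale: "M (xs @ [scale a w]) = scale a (M (xs @ [w]))"
  using multilinear_from_scale[OF M_multilinear vs.vector_space_axioms, of "xs @ [w]" "length xs" a w]
  by simp

lemma M_append_zero: "M (xs @ [0]) = 0"
  using multilinear_from_zero[OF M_multilinear vs.vector_space_axioms, of "xs @ [w]" "length xs"]
  by simp

text \<open>The summand of the recursion for M (xs @ [y, z]) whose m-block consists of the entries of xs
  at the positions in A followed by y and z.\<close>
definition block_term :: "'v list \<Rightarrow> int list \<Rightarrow> 'v \<Rightarrow> 'v \<Rightarrow> nat set \<Rightarrow> 'v" where
  "block_term xs ds y z A =
     scale (of_int (koszul ds (unshuffle (length xs) A)))
       (M (entries_at xs ({..<length xs} - A) @ [m (entries_at xs A @ [y, z])]))"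

lemma M_append_pair_eq_sum:
  assumes xs: "homog G xs ds" and y: "y \<in> G a" and z: "z \<in> G b"
  shows "M (xs @ [y, z]) = (\<Sum>A\<in>Pow {..<length xs}. block_term xs ds y z A)"
proof -
  define k where "k = length xs"
  have len: "length ds = k" using xs homog_length k_def by metis
  define add where "add A = A \<union> {k, Suc k}" for A
  define f where "f B = scale (of_int (koszul (ds @ [a, b]) (unshuffle (k + 2) B)))
                   (M (entries_at (xs @ [y, z]) ({..<k + 2} - B) @ [m (entries_at (xs @ [y, z]) B)]))"
    for B
  have "homog G (xs @ [y, z]) (ds @ [a, b])"
    using homog_append[OF xs, of "[y, z]" "[a, b]"] y z by (simp add: homog_def)
  from M_recursion[OF _ this]
  have "M (xs @ [y, z]) = sum f {B. B \<subseteq> {..<k + 2} \<and> k \<in> B \<and> Suc k \<in> B}"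
    unfolding f_def k_def by simp
  also have "{B. B \<subseteq> {..<k + 2} \<and> k \<in> B \<and> Suc k \<in> B} = add ` Pow {..<k}"
    unfolding add_def by (rule supersets_top_pair_eq_image)
  also have "sum f (add ` Pow {..<k}) = sum (f \<circ> add) (Pow {..<k})"
    by (rule sum.reindex, rule inj_on_inverseI[where g = "\<lambda>B. B - {k, Suc k}"]) (auto simp: add_def)
  also have "\<dots> = (\<Sum>A\<in>Pow {..<k}. block_term xs ds y z A)"
  proof (rule sum.cong[OF refl], unfold o_apply)
    fix A assume "A \<in> Pow {..<k}"
    hence A: "A \<subseteq> {..<k}" by simp
    have "koszul (ds @ [a, b]) (unshuffle (k + 2) (add A)) = koszul ds (unshuffle k A)"
      using koszul_append_upt[of "unshuffle k A" ds "[a, b]" 2] unshuffle_perm[OF A] len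
        unshuffle_insert_top_pair[OF A] by (simp add: add_def numeral_2_eq_2)
    moreover have "{..<k + 2} - add A = {..<k} - A" unfolding add_def by auto
    hence "entries_at (xs @ [y, z]) ({..<k + 2} - add A) = entries_at xs ({..<k} - A)"
      using entries_at_append_left[of "{..<k} - A" xs "[y, z]"] k_def by auto
    moreover have "entries_at (xs @ [y, z]) (add A) = entries_at xs A @ [y, z]"
      using sorted_list_of_set_insert_top_pair[OF A] A finite_subset[OF A] k_def
      by (auto simp: entries_at_def add_def nth_append)
    ultimately show "f (add A) = block_term xs ds y z A" unfolding f_def block_term_def k_def by simp
  qed
  finally show ?thesis unfolding k_def .
qed

lemma block_term_all: "block_term xs ds y z {..<length xs} = m (xs @ [y, z])"
proof -
  have "unshuffle (length xs) {..<length xs} = [0..<length xs]"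
    by (simp add: unshuffle_def lessThan_atLeast0)
  moreover have "koszul ds [0..<length xs] = 1" by (rule koszul_sorted) auto
  ultimately show ?thesis unfolding block_term_def by (simp add: entries_at_all M_singleton)
qed

lemma M_append_pair_eq_m_plus:
  assumes "homog G xs ds" "y \<in> G a" "z \<in> G b"
  shows "M (xs @ [y, z]) =
           m (xs @ [y, z]) + (\<Sum>A\<in>Pow {..<length xs} - {{..<length xs}}. block_term xs ds y z A)"
proof -
  have "sum f (Pow {..<length xs}) = f {..<length xs} + sum f (Pow {..<length xs} - {{..<length xs}})"
    for f :: "nat set \<Rightarrow> 'v"
    by (rule sum.remove) auto
  thus ?thesis using M_append_pair_eq_sum[OF assms] block_term_all by simp
qed

lemma homog_block_args:
  assumes xs: "homog G xs ds" and A: "A \<subseteq> {..<length xs}"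
    and block: "m (entries_at xs A @ [y, z]) \<in> G (sum_list (entries_at ds A) + a + b)"
  shows "homog G (entries_at xs ({..<length xs} - A) @ [m (entries_at xs A @ [y, z])])
                 (entries_at ds ({..<length xs} - A) @ [sum_list (entries_at ds A) + a + b])"
  using homog_append[OF homog_entries_at[OF xs, of "{..<length xs} - A"]] block by auto

lemma block_term_in_G:
  assumes xs: "homog G xs ds" and A: "A \<subseteq> {..<length xs}"
    and block: "m (entries_at xs A @ [y, z]) \<in> G (sum_list (entries_at ds A) + a + b)"
  shows "block_term xs ds y z A \<in> G (sum_list ds + a + b)"
proof -
  have "sum_list (entries_at ds ({..<length xs} - A)) + sum_list (entries_at ds A) = sum_list ds"
    using sum_list_entries_at_split[of A ds] A homog_length[OF xs] by simp
  hence "M (entries_at xs ({..<length xs} - A) @ [m (entries_at xs A @ [y, z])])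
           \<in> G (sum_list ds + a + b)"
    using M_in_G[OF _ homog_block_args[OF assms]] by (simp add: add.assoc[symmetric])
  thus ?thesis unfolding block_term_def by (simp add: vs.subspace_scale subspace_G)
qed

lemma m_in_G: "homog G xs ds \<Longrightarrow> y \<in> G a \<Longrightarrow> z \<in> G b \<Longrightarrow> m (xs @ [y, z]) \<in> G (sum_list ds + a + b)"
proof (induction "length xs" arbitrary: xs ds rule: less_induct)
  case less
  let ?proper = "Pow {..<length xs} - {{..<length xs}}"
  have "block_term xs ds y z A \<in> G (sum_list ds + a + b)" if A: "A \<in> ?proper" for A
  proof (rule block_term_in_G[OF less.prems(1)])
    have "finite A" using A finite_subset by auto
    thus "m (entries_at xs A @ [y, z]) \<in> G (sum_list (entries_at ds A) + a + b)"
      using less.hyps[OF _ homog_entries_at[OF less.prems(1)] less.prems(2,3)] A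
        card_less_if_proper_index_set[OF A] by (simp add: length_entries_at)
  qed (use A in auto)
  hence "sum (block_term xs ds y z) ?proper \<in> G (sum_list ds + a + b)"
    by (intro vs.subspace_sum[OF subspace_G]) auto
  moreover have "M (xs @ [y, z]) \<in> G (sum_list ds + a + b)"
    using M_in_G[OF _ homog_append[OF less.prems(1), of "[y, z]" "[a, b]"]] less.prems(2,3)
    by (simp add: homog_def add.assoc)
  ultimately show ?case
    using M_append_pair_eq_m_plus[OF less.prems] by (metis add_diff_cancel vs.subspace_diff subspace_G)
qed


lemma m_pair_eq_M: "m [y, z] = M [y, z]"
proof -
  have "m xs = M xs" if "length xs = 2" for xs
  proof (rule eq_if_eq_on_homogeneous[OF graded, of "{0, 1}" 2])
    show "m ys = M ys" if len: "length ys = 2" and hom: "\<forall>i\<in>{0, 1}. \<exists>d. ys ! i \<in> G d" for ys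
    proof -
      obtain y z where ys: "ys = [y, z]"
        using len by (metis One_nat_def Suc_1 length_0_conv length_Suc_conv)
      then obtain a b where "y \<in> G a" "z \<in> G b" using hom by auto
      thus ?thesis using M_append_pair_eq_m_plus[of "[]" "[]" y a z b] ys by (simp add: homog_def)
    qed
  qed (use that in \<open>auto intro: m_add M_add\<close>)
  thus ?thesis by simp
qed

lemma m_unit_right: "m [x, one] = x"
  using m_pair_eq_M M_append_one[of "[x]"] M_singleton by simp

lemma m_swap_homogeneous:
  assumes "homog G xs ds" "y \<in> G a" "z \<in> G b"
  shows "m (xs @ [y, z]) = scale (if odd (a * b) then -1 else 1) (m (xs @ [z, y]))"
  using assms
proof (induction "length xs" arbitrary: xs ds rule: less_induct)
  case less
  define k where "k = length xs"
  define e where "e = (if odd (a * b) then -1 else 1 :: 'k)"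
  have "homog G (xs @ [y, z]) (ds @ [a, b])"
    using homog_append[OF less.prems(1), of "[y, z]" "[a, b]"] less.prems by (simp add: homog_def)
  hence "M (xs @ [y, z]) = scale (of_int (koszul (ds @ [a, b]) ([0..<k] @ [Suc k, k])))
                            (M (map ((!) (xs @ [y, z])) ([0..<k] @ [Suc k, k])))"
    by (rule M_koszul[rotated]) (auto simp: k_def)
  moreover have "map ((!) (xs @ [y, z])) ([0..<k] @ [Suc k, k]) = xs @ [z, y]"
    unfolding k_def by (intro nth_equalityI) (auto simp: nth_append)
  ultimately have M_swap: "M (xs @ [y, z]) = scale e (M (xs @ [z, y]))"
    using koszul_swap_last_two[of k ds a b] homog_length[OF less.prems(1)] by (simp add: e_def k_def)
  have "block_term xs ds y z A = scale e (block_term xs ds z y A)"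
    if A: "A \<in> Pow {..<k} - {{..<k}}" for A
  proof -
    have "finite A" using A finite_subset by auto
    hence "m (entries_at xs A @ [y, z]) = scale e (m (entries_at xs A @ [z, y]))"
      using less.hyps[OF _ homog_entries_at[OF less.prems(1)] less.prems(2,3)] A
        card_less_if_proper_index_set[OF A] by (simp add: length_entries_at e_def k_def)
    thus ?thesis unfolding block_term_def by (simp add: M_append_scale vs.scale_left_commute)
  qed
  hence "(\<Sum>A\<in>Pow {..<k} - {{..<k}}. block_term xs ds y z A)
           = scale e (\<Sum>A\<in>Pow {..<k} - {{..<k}}. block_term xs ds z y A)"
    by (simp add: vs.scale_sum_right)
  thus ?case
    using M_append_pair_eq_m_plus[OF less.prems] M_append_pair_eq_m_plus[OF less.prems(1,3,2)] M_swap
    by (simp add: k_def e_def vs.scale_right_distrib)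
qed

lemma m_swap:
  assumes y: "y \<in> G a" and z: "z \<in> G b"
  shows "m (xs @ [y, z]) = scale (if odd (a * b) then -1 else 1) (m (xs @ [z, y]))"
proof (rule eq_if_eq_on_homogeneous[OF graded order.refl, where n = "length xs"
      and F = "\<lambda>ws. m (ws @ [y, z])"
      and H = "\<lambda>ws. scale (if odd (a * b) then -1 else 1) (m (ws @ [z, y]))"])
  show "m (ws @ [y, z]) = scale (if odd (a * b) then -1 else 1) (m (ws @ [z, y]))"
    if "length ws = length xs" "\<forall>i\<in>{..<length xs}. \<exists>d. ws ! i \<in> G d" for ws
    using homog_exists[of ws G] that m_swap_homogeneous[OF _ y z] by auto
qed (simp_all add: m_add_left vs.scale_right_distrib)


lemma M_koszul_prefix:
  assumes xs: "homog G xs ds" and ys: "homog G ys es" and ne: "xs @ ys \<noteq> []"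
    and ps: "distinct ps" "set ps = {..<length xs}"
  shows "M (xs @ ys) = scale (of_int (koszul ds ps)) (M (map ((!) xs) ps @ ys))"
proof -
  let ?qs = "ps @ [length ds..<length ds + length es]"
  have len: "length ds = length xs" "length es = length ys"
    using xs ys homog_length by metis+
  have "distinct ?qs" "set ?qs = {..<length (xs @ ys)}"
    using ps len by (auto simp: lessThan_atLeast0 ivl_disj_un_two(3))
  hence "M (xs @ ys) = scale (of_int (koszul (ds @ es) ?qs)) (M (map ((!) (xs @ ys)) ?qs))"
    by (rule M_koszul[OF ne homog_append[OF xs ys]])
  moreover have "koszul (ds @ es) ?qs = koszul ds ps"
    by (rule koszul_append_upt) (use ps len in auto)
  moreover have "map ((!) (xs @ ys)) ps = map ((!) xs) ps"
    using ps by (intro map_cong) (auto simp: nth_append)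
  moreover have "map ((!) (xs @ ys)) [length xs..<length xs + length ys] = ys"
    by (rule nth_equalityI) (auto simp: nth_append)
  ultimately show ?thesis using len by simp
qed

lemma block_term_restrict_perm:
  assumes xs: "homog G xs ds" and y: "y \<in> G a" and z: "z \<in> G b"
    and P: "distinct P" "set P = {..<length xs}" and B: "B \<subseteq> {..<length xs}"
    and block: "m (entries_at xs ((!) P ` B) @ [y, z]) =
                  scale (of_int (koszul (entries_at ds ((!) P ` B)) (restrict_perm P B)))
                    (m (map ((!) (entries_at xs ((!) P ` B))) (restrict_perm P B) @ [y, z]))"
  shows "block_term xs ds y z ((!) P ` B) =
           scale (of_int (koszul ds P)) (block_term (map ((!) xs) P) (map ((!) ds) P) y z B)"
proof -
  define k where "k = length xs"
  let ?A = "(!) P ` B" and ?B' = "{..<k} - B" and ?xs = "map ((!) xs) P"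
  have len: "length P = k" using P distinct_card k_def by fastforce
  have A: "?A \<subseteq> {..<k}" using B P len nth_mem k_def by fastforce
  have Ac: "{..<k} - ?A = (!) P ` ?B'" using image_nth_Diff[OF P B] k_def by simp
  define w where "w = m (entries_at xs ?A @ [y, z])"
  define w' where "w' = m (entries_at ?xs B @ [y, z])"
  have w: "w = scale (of_int (koszul (entries_at ds ?A) (restrict_perm P B))) w'"
    unfolding w_def w'_def block entries_at_map_nth[OF P B] ..
  have hw: "homog G [w] [sum_list (entries_at ds ?A) + a + b]"
    using m_in_G[OF homog_entries_at[OF xs] y z] A k_def by (simp add: w_def)
  have perm: "distinct (restrict_perm P ?B')"
    "set (restrict_perm P ?B') = {..<length (entries_at xs ({..<k} - ?A))}"
  proof -
    have "inj_on ((!) P) ?B'" using P len k_def by (intro inj_on_nth) auto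
    hence "length (entries_at xs ({..<k} - ?A)) = card ?B'"
      unfolding Ac by (simp add: length_entries_at card_image)
    moreover have "?B' \<subseteq> {..<length xs}" using k_def by auto
    ultimately show "distinct (restrict_perm P ?B')"
      "set (restrict_perm P ?B') = {..<length (entries_at xs ({..<k} - ?A))}"
      using restrict_perm_perm(1,2)[OF P] by simp_all
  qed
  have "{..<k} - ?A \<subseteq> {..<length xs}" using k_def by auto
  from M_koszul_prefix[OF homog_entries_at[OF xs this] hw _ perm]
  have "M (entries_at xs ({..<k} - ?A) @ [w])
           = scale (of_int (koszul (entries_at ds ({..<k} - ?A)) (restrict_perm P ?B')))
               (M (map ((!) (entries_at xs ({..<k} - ?A))) (restrict_perm P ?B') @ [w]))"
    by simp
  also have "map ((!) (entries_at xs ({..<k} - ?A))) (restrict_perm P ?B') = entries_at ?xs ?B'"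
    unfolding Ac using entries_at_map_nth[OF P, of ?B'] k_def by auto
  finally have "M (entries_at xs ({..<k} - ?A) @ [w])
      = scale (of_int (koszul (entries_at ds ({..<k} - ?A)) (restrict_perm P ?B')))
          (M (entries_at ?xs ?B' @ [w]))" .
  hence "block_term xs ds y z ?A
           = scale (of_int (koszul ds (unshuffle k ?A) *
                            (koszul (entries_at ds ({..<k} - ?A)) (restrict_perm P ?B') *
                             koszul (entries_at ds ?A) (restrict_perm P B))))
               (M (entries_at ?xs ?B' @ [w']))"
    unfolding block_term_def k_def[symmetric] w_def[symmetric]
    by (simp only: w M_append_scale vs.scale_scale of_int_mult mult.commute)
  also have "\<dots> = scale (of_int (koszul ds P)) (block_term ?xs (map ((!) ds) P) y z B)"
    unfolding koszul_restrict_perm[OF P[unfolded k_def[symmetric]] B[unfolded k_def[symmetric]]]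
    unfolding block_term_def w'_def using len by simp
  finally show ?thesis .
qed

lemma m_permute_homogeneous:
  assumes "homog G xs ds" "y \<in> G a" "z \<in> G b" "distinct P" "set P = {..<length xs}"
  shows "m (xs @ [y, z]) = scale (of_int (koszul ds P)) (m (map ((!) xs) P @ [y, z]))"
  using assms
proof (induction "length xs" arbitrary: xs ds P rule: less_induct)
  case less
  note xs = less.prems(1) and y = less.prems(2) and z = less.prems(3) and P = less.prems(4,5)
  define k where "k = length xs"
  let ?proper = "Pow {..<k} - {{..<k}}" and ?xs = "map ((!) xs) P" and ?ds = "map ((!) ds) P"
  define c where "c = scale (of_int (koszul ds P))"
  have len: "length ?xs = k" using P distinct_card k_def by fastforce
  have "homog G [y, z] [a, b]" using y z by (simp add: homog_def)
  hence "M (xs @ [y, z]) = c (M (?xs @ [y, z]))"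
    unfolding c_def by (rule M_koszul_prefix[OF xs _ _ P]) simp
  also have "M (?xs @ [y, z]) = m (?xs @ [y, z]) + sum (block_term ?xs ?ds y z) ?proper"
    using M_append_pair_eq_m_plus[OF homog_map_nth[OF xs] y z] P len by (simp add: k_def)
  finally have "M (xs @ [y, z]) = c (m (?xs @ [y, z])) + c (sum (block_term ?xs ?ds y z) ?proper)"
    unfolding c_def by (simp add: vs.scale_right_distrib)
  moreover have "sum (block_term xs ds y z) ?proper = c (sum (block_term ?xs ?ds y z) ?proper)"
  proof -
    have "sum (block_term xs ds y z) ?proper = sum (block_term xs ds y z \<circ> image ((!) P)) ?proper"
      unfolding comp_def
      by (rule sum.reindex_bij_betw[OF bij_betw_image_nth_proper_subsets[OF P[unfolded k_def[symmetric]]],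
            symmetric])
    also have "\<dots> = (\<Sum>B\<in>?proper. c (block_term ?xs ?ds y z B))"
    proof (rule sum.cong[OF refl], unfold o_apply)
      fix B assume B: "B \<in> ?proper"
      have "inj_on ((!) P) B" using P B len by (intro inj_on_nth) auto
      hence "card ((!) P ` B) = card B" by (rule card_image)
      moreover have "finite B" using B finite_subset by auto
      ultimately have "length (entries_at xs ((!) P ` B)) < k"
        using card_less_if_proper_index_set[OF B] by (simp add: length_entries_at)
      moreover have "(!) P ` B \<subseteq> {..<length xs}" using B P len nth_mem k_def by fastforce
      moreover note restrict_perm_perm[OF P, of B]
      ultimately show "block_term xs ds y z ((!) P ` B) = c (block_term ?xs ?ds y z B)"
        unfolding c_def using B k_def \<open>card ((!) P ` B) = card B\<close> finite_subset[of B "{..<k}"]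
        by (intro block_term_restrict_perm[OF xs y z P]
            less.hyps[OF _ homog_entries_at[OF xs] y z]) (auto simp: length_entries_at)
    qed
    finally show ?thesis unfolding c_def by (simp add: vs.scale_sum_right)
  qed
  ultimately show ?case
    using M_append_pair_eq_m_plus[OF xs y z] unfolding c_def k_def by simp
qed

lemma m_permute:
  assumes xs: "homog G xs ds" and P: "distinct P" "set P = {..<length xs}"
  shows "m (xs @ [y, z]) = scale (of_int (koszul ds P)) (m (map ((!) xs) P @ [y, z]))"
proof (rule eq_if_eq_on_homogeneous[OF graded, of "{0, 1}" 2
      "\<lambda>ws. m (xs @ ws)" "\<lambda>ws. scale (of_int (koszul ds P)) (m (map ((!) xs) P @ ws))"])
  show "m (xs @ ws) = scale (of_int (koszul ds P)) (m (map ((!) xs) P @ ws))"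
    if len: "length ws = 2" and hom: "\<forall>i\<in>{0, 1}. \<exists>d. ws ! i \<in> G d" for ws
  proof -
    obtain u w where ws: "ws = [u, w]"
      using len by (metis One_nat_def Suc_1 length_0_conv length_Suc_conv)
    then obtain a b where "u \<in> G a" "w \<in> G b" using hom by auto
    thus ?thesis unfolding ws by (rule m_permute_homogeneous[OF xs _ _ P])
  qed
qed (auto simp: m_add_right vs.scale_right_distrib)


lemma M_remove_one:
  assumes us: "homog G us ds" and vs: "homog G vs es" and ne: "us @ vs \<noteq> []"
  shows "M (us @ one # vs) = M (us @ vs)"
proof -
  let ?xs = "us @ one # vs" and ?ds = "ds @ 0 # es" and ?j = "length us"
  let ?P = "[0..<?j] @ [Suc ?j..<length ?xs] @ [?j]"
  have len: "length ?ds = length ?xs" using homog_length[OF us] homog_length[OF vs] by simp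
  have "homog G ?xs ?ds"
    using homog_append[OF us homog_append[OF _ vs, of "[one]" "[0]"]] one_in_G0 by simp
  hence "M ?xs = scale (of_int (koszul ?ds ?P)) (M (map ((!) ?xs) ?P))"
    by (rule M_koszul[rotated]) (use move_to_end_perm[of ?j "length ?xs"] in auto)
  also have "koszul ?ds ?P = 1"
    unfolding len[symmetric] using homog_length[OF us] by (intro koszul_move_to_end) (auto simp: nth_append)
  also have "map ((!) ?xs) ?P = (us @ vs) @ [one]"
    using map_nth_move_to_end[of ?j ?xs] by simp
  finally show ?thesis using M_append_one[OF ne] by simp
qed

lemma block_term_append_one:
  assumes xs: "homog G xs ds" and y: "y \<in> G a" and z: "z \<in> G b" and A: "A \<subseteq> {..<length xs}"
  shows "block_term (xs @ [one]) (ds @ [0]) y z A = block_term xs ds y z A"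
proof -
  let ?k = "length xs"
  have len: "length ds = ?k" using homog_length[OF xs] .
  have "{..<length (xs @ [one])} - A = ({..<?k} - A) \<union> {?k}" using A by auto
  moreover have "sorted_list_of_set (({..<?k} - A) \<union> {?k}) = sorted_list_of_set ({..<?k} - A) @ [?k]"
    by (subst sorted_list_of_set_Un_less) auto
  ultimately have "entries_at (xs @ [one]) ({..<length (xs @ [one])} - A)
                     = entries_at xs ({..<?k} - A) @ [one]"
    unfolding entries_at_def by (simp add: nth_append)
  moreover have "entries_at (xs @ [one]) A = entries_at xs A"
    using entries_at_append_left[OF A] .
  moreover have "koszul (ds @ [0]) (unshuffle (Suc ?k) A) = koszul ds (unshuffle ?k A)"
    using koszul_unshuffle_insert_even[OF A len] by simp
  moreover have "M (entries_at xs ({..<?k} - A) @ one # [m (entries_at xs A @ [y, z])])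
                   = M (entries_at xs ({..<?k} - A) @ [m (entries_at xs A @ [y, z])])"
    using m_in_G[OF homog_entries_at[OF xs A] y z]
    by (intro M_remove_one[OF homog_entries_at[OF xs], where es = "[sum_list (entries_at ds A) + a + b]"])
      auto
  ultimately show ?thesis unfolding block_term_def by simp
qed

lemma block_term_append_one_insert:
  assumes xs: "homog G xs ds" and X: "X \<subseteq> {..<length xs}"
    and block: "m (entries_at xs X @ [one, y, z]) = 0"
  shows "block_term (xs @ [one]) es y z (insert (length xs) X) = 0"
proof -
  have "sorted_list_of_set (X \<union> {length xs}) = sorted_list_of_set X @ [length xs]"
    using X finite_subset by (subst sorted_list_of_set_Un_less) auto
  hence "entries_at (xs @ [one]) (insert (length xs) X) = entries_at xs X @ [one]"
    using X finite_subset[OF X] unfolding entries_at_def by (auto simp: nth_append)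
  thus ?thesis using block unfolding block_term_def by (simp add: M_append_zero)
qed

text \<open>Only the term with empty m-block survives in the recursion, and it equals
  M (xs @ [m [y, one]]) = M (xs @ [y]) = M (xs @ [y, one]).\<close>
lemma m_unit_last_vanishes:
  assumes shorter: "\<And>ys es j. homog G ys es \<Longrightarrow> 3 \<le> length ys \<Longrightarrow> length ys < length xs + 2 \<Longrightarrow>
                      j < length ys \<Longrightarrow> ys ! j = one \<Longrightarrow> m ys = 0"
    and xs: "homog G xs ds" "xs \<noteq> []" and y: "y \<in> G a"
  shows "m (xs @ [y, one]) = 0"
proof -
  let ?proper = "Pow {..<length xs} - {{..<length xs}}"
  have "block_term xs ds y one A = 0" if A: "A \<in> ?proper - {{}}" for A
  proof -
    have fin: "finite A" using A finite_subset by auto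
    have hom: "homog G (entries_at xs A @ [y, one]) (entries_at ds A @ [a, 0])"
      using homog_append[OF homog_entries_at[OF xs(1)], of A "[y, one]" "[a, 0]"] A y one_in_G0
      by (simp add: homog_def)
    have card: "card A \<noteq> 0" "card A < length xs"
      using A fin card_less_if_proper_index_set[of A] by (auto simp: card_eq_0_iff)
    have "m (entries_at xs A @ [y, one]) = 0"
      by (rule shorter[OF hom, of "Suc (card A)"])
        (use card fin in \<open>auto simp: length_entries_at nth_append Suc_le_eq card_gt_0_iff\<close>)
    thus ?thesis unfolding block_term_def by (simp add: M_append_zero)
  qed
  moreover have "block_term xs ds y one {} = M (xs @ [y])"
  proof -
    have "unshuffle (length xs) {} = [0..<length xs]" by (simp add: unshuffle_def lessThan_atLeast0)
    thus ?thesis unfolding block_term_def using entries_at_all[of xs] m_unit_right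
      by (simp add: koszul_sorted)
  qed
  moreover have "{} \<in> ?proper" using xs(2) by auto
  ultimately have "sum (block_term xs ds y one) ?proper = M (xs @ [y])"
    by (simp add: sum.remove[of ?proper "{}"] sum.neutral)
  thus ?thesis
    using M_append_pair_eq_m_plus[OF xs(1) y one_in_G0] M_append_one[of "xs @ [y]"] by simp
qed

text \<open>The terms whose m-block contains the unit vanish; the others are the terms of the recursion
  for xs @ [y, z].\<close>
lemma m_unit_before_pair_vanishes:
  assumes shorter: "\<And>ys es j. homog G ys es \<Longrightarrow> 3 \<le> length ys \<Longrightarrow> length ys < length xs + 3 \<Longrightarrow>
                      j < length ys \<Longrightarrow> ys ! j = one \<Longrightarrow> m ys = 0"
    and xs: "homog G xs ds" and y: "y \<in> G a" and z: "z \<in> G b"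
  shows "m (xs @ [one, y, z]) = 0"
proof -
  let ?k = "length xs" and ?T = "block_term (xs @ [one]) (ds @ [0]) y z"
  have xs1: "homog G (xs @ [one]) (ds @ [0])"
    using homog_append[OF xs, of "[one]" "[0]"] one_in_G0 by simp
  have "?T (insert ?k X) = 0" if X: "X \<in> Pow {..<?k} - {{..<?k}}" for X
  proof (rule block_term_append_one_insert[OF xs])
    have fin: "finite X" using X finite_subset by auto
    have "homog G (entries_at xs X @ [one, y, z]) (entries_at ds X @ [0, a, b])"
      using homog_append[OF homog_entries_at[OF xs], of X "[one, y, z]" "[0, a, b]"] X y z one_in_G0
      by (simp add: homog_def)
    thus "m (entries_at xs X @ [one, y, z]) = 0"
      using X fin card_less_if_proper_index_set[OF X]
      by (intro shorter[of _ _ "card X"]) (auto simp: length_entries_at nth_append)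
  qed (use X in auto)
  moreover have "inj_on (insert ?k) (Pow {..<?k} - {{..<?k}})"
    by (rule inj_on_inverseI[where g = "\<lambda>B. B - {?k}"]) auto
  ultimately have "sum ?T (insert ?k ` (Pow {..<?k} - {{..<?k}})) = 0"
    by (simp add: sum.reindex)
  moreover have "sum ?T (Pow {..<?k}) = M (xs @ [y, z])"
    using M_append_pair_eq_sum[OF xs y z] block_term_append_one[OF xs y z] by simp
  moreover have "Pow {..<?k} \<inter> insert ?k ` (Pow {..<?k} - {{..<?k}}) = {}" by auto
  ultimately have "sum ?T (Pow {..<Suc ?k} - {{..<Suc ?k}}) = M (xs @ [y, z])"
    unfolding Pow_lessThan_Suc_proper by (simp add: sum.union_disjoint)
  moreover have "M ((xs @ [one]) @ [y, z]) = M (xs @ [y, z])"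
    using M_remove_one[OF xs, of "[y, z]" "[a, b]"] y z by (simp add: homog_def)
  ultimately show ?thesis
    using M_append_pair_eq_m_plus[OF xs1 y z] by simp
qed


lemma m_unit_vanishes_homogeneous:
  "homog G xs ds \<Longrightarrow> 3 \<le> length xs \<Longrightarrow> j < length xs \<Longrightarrow> xs ! j = one \<Longrightarrow> m xs = 0"
proof (induction "length xs" arbitrary: xs ds j rule: less_induct)
  case less
  have shorter: "m ys = 0"
    if "homog G ys es" "3 \<le> length ys" "length ys < length xs" "i < length ys" "ys ! i = one" for ys es i
    using less.hyps that by blast
  have "2 \<le> length xs" using less.prems(2) by simp
  then obtain us y z where xs: "xs = us @ [y, z]" by (rule obtain_append_pair)
  obtain es a b where "ds = es @ [a, b]" and us: "homog G us es" and y: "y \<in> G a" and z: "z \<in> G b"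
    using less.prems(1) unfolding xs by (rule homog_append_pair_cases)
  have "us \<noteq> []" using less.prems(2) xs by auto
  consider "j = Suc (length us)" | "j = length us" | "j < length us"
    using less.prems(3) xs by fastforce
  thus ?case
  proof cases
    case 1
    hence "z = one" using less.prems(4) xs by (simp add: nth_append)
    thus ?thesis
      using m_unit_last_vanishes[OF shorter us \<open>us \<noteq> []\<close> y] xs by simp
  next
    case 2
    hence "y = one" using less.prems(4) xs by (simp add: nth_append)
    thus ?thesis
      using m_swap_homogeneous[OF us one_in_G0 z] m_unit_last_vanishes[OF shorter us \<open>us \<noteq> []\<close> z] xs
      by simp
  next
    case 3
    \<comment> \<open>move the unit to the position just before y and z\<close>
    let ?P = "[0..<j] @ [Suc j..<length us] @ [j]"
    let ?vs = "take j us @ drop (Suc j) us"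
    have "us ! j = one" using 3 less.prems(4) xs by (simp add: nth_append)
    hence "map ((!) us) ?P = ?vs @ [one]" using map_nth_move_to_end[OF 3] by simp
    hence "m xs = scale (of_int (koszul es ?P)) (m (?vs @ [one, y, z]))"
      using m_permute_homogeneous[OF us y z move_to_end_perm[OF 3]] xs by simp
    moreover have "homog G ?vs (take j es @ drop (Suc j) es)"
      using us homog_length[OF us] by (auto simp: homog_iff nth_append min_def)
    hence "m (?vs @ [one, y, z]) = 0"
      using 3 xs by (intro m_unit_before_pair_vanishes[OF shorter _ y z]) auto
    ultimately show ?thesis by simp
  qed
qed

lemma m_unit_vanishes:
  assumes "3 \<le> length xs" "j < length xs" "xs ! j = one"
  shows "m xs = 0"
proof -
  \<comment> \<open>unlike m, the map ys \<mapsto> m (ys[j := one]) needs no homogeneity in slot j\<close>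
  have "m (xs[j := one]) = 0"
  proof (rule eq_if_eq_on_homogeneous[OF graded, of "{..<length xs} - {j}" "length xs"
        "\<lambda>ys. m (ys[j := one])" "\<lambda>_. 0"])
    show "m (ys[j := one]) = 0"
      if "length ys = length xs" "\<forall>i\<in>{..<length xs} - {j}. \<exists>d. ys ! i \<in> G d" for ys
    proof -
      have "\<exists>d. ys[j := one] ! i \<in> G d" if "i < length (ys[j := one])" for i
        using that \<open>\<forall>i\<in>_. _\<close> \<open>length ys = length xs\<close> one_in_G0 by (cases "i = j") auto
      then obtain ds where "homog G (ys[j := one]) ds" using homog_exists by blast
      thus ?thesis using assms \<open>length ys = length xs\<close> by (intro m_unit_vanishes_homogeneous) auto
    qed
  qed (use assms in \<open>auto simp: list_update_swap m_add\<close>)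
  thus ?thesis using assms(3) by (metis list_update_id)
qed

end

theorem lemma6p1:
  fixes scale :: "'k::field_char_0 \<Rightarrow> 'v::ab_group_add \<Rightarrow> 'v"
    and G :: "int \<Rightarrow> 'v set" and one :: 'v and M m :: "'v list \<Rightarrow> 'v"
  assumes "correlation_algebra scale G one M"
    and "assoc_family scale G M m"
  shows "(\<forall>x. m [x, one] = x)
       \<and> (\<forall>xs j. 3 \<le> length xs \<and> j < length xs \<and> xs ! j = one \<longrightarrow> m xs = 0)
       \<and> (\<forall>xs y z a b. y \<in> G a \<and> z \<in> G b \<longrightarrow>
            m (xs @ [y, z]) = scale (if odd (a * b) then -1 else 1) (m (xs @ [z, y])))
       \<and> (\<forall>xs ds y z \<sigma>. 2 \<le> length xs \<and> homog G xs ds \<and> \<sigma> permutes {..<length xs} \<longrightarrow>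
            m (xs @ [y, z]) = scale (of_int (koszul ds (map \<sigma> [0..<length xs])))
                                (m (map (\<lambda>i. xs ! \<sigma> i) [0..<length xs] @ [y, z])))"
proof -
  interpret correlation_family scale G one M m
    using assms by (rule correlation_family.intro)
  show ?thesis
  proof (intro conjI allI impI)
    show "m [x, one] = x" for x by (rule m_unit_right)
    show "m xs = 0" if "3 \<le> length xs \<and> j < length xs \<and> xs ! j = one" for xs j
      using that m_unit_vanishes by blast
    show "m (xs @ [y, z]) = scale (if odd (a * b) then -1 else 1) (m (xs @ [z, y]))"
      if "y \<in> G a \<and> z \<in> G b" for xs y z a b
      using that m_swap by blast
    show "m (xs @ [y, z]) = scale (of_int (koszul ds (map \<sigma> [0..<length xs])))
                              (m (map (\<lambda>i. xs ! \<sigma> i) [0..<length xs] @ [y, z]))"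
      if "2 \<le> length xs \<and> homog G xs ds \<and> \<sigma> permutes {..<length xs}" for xs ds y z \<sigma>
      using that m_permute[of xs ds "map \<sigma> [0..<length xs]"] permutes_upt_list[of \<sigma> "length xs"]
      by (simp add: map_map comp_def)
  qed
qed

end
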